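(* Let $f:(0,\infty)\to(0,\infty)$ be continuous, let $F(x)=\int_x^1\frac{du}{f(u)}$ for $x>0$, and suppose $\lim_{x\to0^+}F(x)=+\infty$, so that the inverse $F^{-1}$ of the strictly decreasing function $F$ is defined on $[0,\infty)$ and $F^{-1}(t)\to0$ as $t\to\infty$. If $f\circ F^{-1}\in\mathrm{RV}_\infty(-1)$, then $F^{-1}\in\mathrm{RV}_\infty(0)$.
   Context: $\mathrm{RV}_\infty(\alpha)$: the class of measurable functions $h$, positive for large arguments, with $\lim_{t\to\infty}h(\lambda t)/h(t)=\lambda^\alpha$ for every $\lambda>0$. *)

theory Defs
  imports "HOL-Analysis.Analysis"
begin

definition RV_inf :: "real \<Rightarrow> (real \<Rightarrow> real) set" where
  "RV_inf \<alpha> = {h. set_borel_measurable borel {0<..} h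
      \<and> eventually (\<lambda>t. h t > 0) at_top
      \<and> (\<forall>c>0. ((\<lambda>t. h (c * t) / h t) \<longlongrightarrow> c powr \<alpha>) at_top)}"

definition F_of :: "(real \<Rightarrow> real) \<Rightarrow> real \<Rightarrow> real" where
  "F_of f x = (LBINT u=x..1. 1 / f u)"

definition Finv :: "(real \<Rightarrow> real) \<Rightarrow> real \<Rightarrow> real" where
  "Finv f = inv_into {0<..} (F_of f)"

end

theory Submission
  imports Defs
begin

text \<open>Write \<open>G = F\<^sup>-\<^sup>1\<close> and \<open>h = f \<circ> G\<close>. Then \<open>G\<close> is positive with \<open>G' = -h\<close>, and \<open>h\<close> varies
  regularly with index \<open>-1\<close>. Fix \<open>c > 1\<close> and \<open>N\<close>. For large \<open>t\<close> and every \<open>k < N\<close> the rescaled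
  derivative \<open>c\<^sup>k h(c\<^sup>k x)\<close> is at least \<open>h(x)/2\<close>, so each decrement \<open>G(c\<^sup>k t) - G(c\<^sup>k\<^sup>+\<^sup>1 t)\<close> is at
  least half of \<open>G(t) - G(ct)\<close>. These \<open>N\<close> decrements telescope to less than \<open>G(t)\<close>, whence
  \<open>0 \<le> 1 - G(ct)/G(t) \<le> 2/N\<close>, i.e. \<open>G(ct)/G(t) \<rightarrow> 1\<close>.\<close>

lemma F_of_has_real_derivative:
  fixes f :: "real \<Rightarrow> real"
  assumes cont: "continuous_on {0<..} f" and pos: "\<forall>x>0. f x > 0" and x: "x > 0"
  shows "(F_of f has_real_derivative -(1/f x)) (at x)"
proof -
  define a where "a = min x 1 / 2"
  define b where "b = max x 1 + 1"
  have ab: "a > 0" "a \<le> 1" "1 \<le> b" "a < x" "x < b" using x by (auto simp: a_def b_def)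
  have sub: "{a..b} \<subseteq> {0<..}" using ab by auto
  have contf: "continuous_on {a..b} (\<lambda>u. 1/f u)"
    using sub pos by (intro continuous_intros continuous_on_subset[OF cont]) auto
  have "((\<lambda>u. LBINT y=ereal 1..u. 1/f y) has_vector_derivative (1/f x)) (at x within {a..b})"
    by (rule interval_integral_FTC2[OF ab(2,3) contf]) (use ab in auto)
  moreover have "at x within {a..b} = at x"
    by (rule at_within_interior) (use ab in auto)
  ultimately have "((\<lambda>u. LBINT y=ereal 1..u. 1/f y) has_real_derivative (1/f x)) (at x)"
    by (simp add: has_real_derivative_iff_has_vector_derivative)
  moreover have "F_of f = (\<lambda>u. - (LBINT y=ereal 1..u. 1/f y))"
    unfolding F_of_def by (rule ext, subst interval_integral_endpoints_reverse, simp add: one_ereal_def)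
  ultimately show ?thesis by (simp add: DERIV_minus)
qed

locale F_of_blowup =
  fixes f :: "real \<Rightarrow> real"
  assumes cont: "continuous_on {0<..} f"
    and pos: "\<forall>x>0. f x > 0"
    and blowup: "filterlim (F_of f) at_top (at_right 0)"
begin

lemma F_of_deriv: "x > 0 \<Longrightarrow> (F_of f has_real_derivative -(1/f x)) (at x)"
  using F_of_has_real_derivative[OF cont pos] .

lemma isCont_F_of: "x > 0 \<Longrightarrow> isCont (F_of f) x"
  using F_of_deriv DERIV_isCont by blast

lemma F_of_strict_decreasing:
  assumes "0 < x" "x < y"
  shows "F_of f y < F_of f x"
proof -
  have "F_of f x > F_of f y"
  proof (rule DERIV_neg_imp_decreasing[where f = "F_of f"])
    fix z assume "x \<le> z" "z \<le> y"
    then have "z > 0" using assms by linarith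
    then show "\<exists>d. (F_of f has_real_derivative d) (at z) \<and> d < 0"
      using F_of_deriv pos by (intro exI[of _ "-(1/f z)"]) auto
  qed (fact assms)
  then show ?thesis by simp
qed

lemma inj_on_F_of: "inj_on (F_of f) {0<..}"
proof (rule inj_onI)
  fix x y assume "x \<in> {0<..}" "y \<in> {0<..}" "F_of f x = F_of f y"
  then show "x = y"
    using F_of_strict_decreasing[of x y] F_of_strict_decreasing[of y x]
    by (cases x y rule: linorder_cases) auto
qed

lemma F_of_one: "F_of f 1 = 0"
  unfolding F_of_def by (simp add: one_ereal_def)

lemma nonneg_in_range_F_of:
  assumes t: "t \<ge> 0"
  shows "t \<in> F_of f ` {0<..}"
proof -
  have "eventually (\<lambda>x. F_of f x > t) (at_right 0)"
    using blowup unfolding filterlim_at_top_dense by blast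
  then obtain b where b: "b > 0" "\<And>y. 0 < y \<Longrightarrow> y < b \<Longrightarrow> F_of f y > t"
    by (auto simp: eventually_at_right_field)
  define x0 where "x0 = min (b/2) (1/2)"
  have x0: "0 < x0" "x0 \<le> 1" "F_of f x0 > t" using b by (auto simp: x0_def)
  have "\<forall>x. x0 \<le> x \<and> x \<le> 1 \<longrightarrow> isCont (F_of f) x"
    using x0 isCont_F_of by force
  then have "\<exists>x. x0 \<le> x \<and> x \<le> 1 \<and> F_of f x = t"
    using x0 t F_of_one by (intro IVT2) auto
  then show ?thesis using x0 by force
qed

lemma Finv_F_of: "z > 0 \<Longrightarrow> Finv f (F_of f z) = z"
  unfolding Finv_def using inj_on_F_of by (simp add: inv_into_f_f)

lemma F_of_Finv: "t \<ge> 0 \<Longrightarrow> F_of f (Finv f t) = t"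
  unfolding Finv_def by (rule f_inv_into_f[OF nonneg_in_range_F_of])

lemma Finv_pos: "t \<ge> 0 \<Longrightarrow> Finv f t > 0"
  using inv_into_into[OF nonneg_in_range_F_of] unfolding Finv_def by simp

lemma isCont_Finv:
  assumes t: "t > 0"
  shows "isCont (Finv f) t"
proof -
  let ?x = "Finv f t"
  have x: "?x > 0" using Finv_pos t by simp
  have "isCont (Finv f) (F_of f ?x)"
  proof (rule isCont_inverse_function[where f = "F_of f" and x = ?x and d = "?x/2"])
    fix z assume "\<bar>z - ?x\<bar> \<le> ?x / 2"
    then have "z > 0" using x by linarith
    then show "Finv f (F_of f z) = z" "isCont (F_of f) z"
      using Finv_F_of isCont_F_of by auto
  qed (use x in simp)
  then show ?thesis using F_of_Finv t by simp
qed

lemma Finv_has_real_derivative: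
  assumes t: "t > 0"
  shows "(Finv f has_real_derivative -f (Finv f t)) (at t)"
proof -
  have x: "Finv f t > 0" using Finv_pos t by simp
  have "(Finv f has_real_derivative inverse (-(1/f (Finv f t)))) (at t)"
    by (rule DERIV_inverse_function[where f = "F_of f" and a = 0 and b = "t+1"])
       (use x t pos F_of_deriv F_of_Finv isCont_Finv in auto)
  then show ?thesis by simp
qed

lemma Finv_borel_measurable: "set_borel_measurable borel {0<..} (Finv f)"
  unfolding set_borel_measurable_def
  by (rule borel_measurable_continuous_on_indicator)
     (use isCont_Finv in \<open>auto intro!: continuous_at_imp_continuous_on\<close>)

end

lemma RV_minus_one_rescaled_ge_half:
  fixes h :: "real \<Rightarrow> real"
  assumes hpos: "eventually (\<lambda>v. h v > 0) at_top"
    and rv: "((\<lambda>v. h (s * v) / h v) \<longlongrightarrow> s powr -1) at_top"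
    and s: "s > 0"
  shows "eventually (\<lambda>v. s * h (s * v) \<ge> h v / 2) at_top"
proof -
  have "s powr -1 > 1/(2 * s)" using s by (simp add: powr_minus field_simps)
  with rv have "eventually (\<lambda>v. h (s * v) / h v > 1/(2 * s)) at_top"
    by (rule order_tendstoD(1))
  with hpos show ?thesis
  proof eventually_elim
    case (elim v)
    then show ?case using s by (simp add: field_simps)
  qed
qed

text \<open>Compare the derivatives of \<open>y \<mapsto> G(s y)\<close> and \<open>y \<mapsto> G(y)/2\<close> on \<open>[t, c t]\<close>.\<close>
lemma rescaled_decrement_ge_half:
  fixes G h :: "real \<Rightarrow> real"
  assumes der: "\<And>x. x > 0 \<Longrightarrow> (G has_real_derivative -h x) (at x)"
    and s: "s > 0" and t: "t > 0" and c: "c \<ge> 1"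
    and bound: "\<And>x. t \<le> x \<Longrightarrow> x \<le> c*t \<Longrightarrow> s * h (s*x) \<ge> h x / 2"
  shows "G (s*t) - G (s*(c*t)) \<ge> (G t - G (c*t)) / 2"
proof -
  define \<phi> where "\<phi> = (\<lambda>y. G (s*y) - G y / 2)"
  have "\<phi> t \<ge> \<phi> (c*t)"
  proof (rule DERIV_nonpos_imp_nonincreasing[where f = \<phi>])
    fix x assume x: "t \<le> x" "x \<le> c*t"
    then have "x > 0" "s*x > 0" using s t by auto
    then have "(\<phi> has_real_derivative (-h (s*x)) * (s*1) - (-h x)/2) (at x)"
      unfolding \<phi>_def using der
      by (intro DERIV_diff DERIV_chain2[where f = G] DERIV_cmult DERIV_ident DERIV_cdivide) auto
    moreover have "(-h (s*x)) * (s*1) - (-h x)/2 \<le> 0"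
      using bound[OF x] by (simp add: mult.commute)
    ultimately show "\<exists>y. (\<phi> has_real_derivative y) (at x) \<and> y \<le> 0" by blast
  qed (use c t in simp)
  then show ?thesis by (simp add: \<phi>_def algebra_simps diff_divide_distrib)
qed

lemma decrement_le_of_RV_minus_one_derivative:
  fixes G h :: "real \<Rightarrow> real" and N :: nat
  assumes Gpos: "\<And>t. t > 0 \<Longrightarrow> G t > 0"
    and der: "\<And>t. t > 0 \<Longrightarrow> (G has_real_derivative -h t) (at t)"
    and hpos: "eventually (\<lambda>v. h v > 0) at_top"
    and rv: "\<And>s. s > 0 \<Longrightarrow> ((\<lambda>v. h (s * v) / h v) \<longlongrightarrow> s powr -1) at_top"
    and c: "c > 1" and N: "N > 0"
  shows "eventually (\<lambda>t. G t - G (c*t) \<le> 2/N * G t) at_top"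
proof -
  have "eventually (\<lambda>v. \<forall>k\<in>{..<N}. c^k * h (c^k * v) \<ge> h v / 2) at_top"
    using c by (intro eventually_ball_finite ballI RV_minus_one_rescaled_ge_half hpos rv) auto
  then obtain T where T: "\<And>v k. v \<ge> T \<Longrightarrow> k < N \<Longrightarrow> c^k * h (c^k * v) \<ge> h v / 2"
    by (auto simp: eventually_at_top_linorder)
  show ?thesis unfolding eventually_at_top_linorder
  proof (intro exI allI impI)
    fix t assume t: "t \<ge> max T 1"
    have "(G t - G (c*t)) / 2 \<le> G (c^k*t) - G (c^Suc k*t)" if "k < N" for k
      using rescaled_decrement_ge_half[OF der, of "c^k" t c] T[of _ k] that t c
      by (simp add: mult.assoc mult.left_commute)
    then have "N * ((G t - G (c*t)) / 2) \<le> (\<Sum>k<N. G (c^k*t) - G (c^Suc k*t))"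
      using sum_mono[of "{..<N}" "\<lambda>_. (G t - G (c*t)) / 2"] by simp
    also have "\<dots> = G t - G (c^N*t)"
      using sum_lessThan_telescope'[where f = "\<lambda>k. G (c^k*t)"] by simp
    also have "\<dots> < G t" using Gpos t c by simp
    finally show "G t - G (c*t) \<le> 2/N * G t" using N by (simp add: field_simps)
  qed
qed

lemma slowly_varying_of_RV_minus_one_derivative:
  fixes G h :: "real \<Rightarrow> real"
  assumes Gpos: "\<And>t. t > 0 \<Longrightarrow> G t > 0"
    and der: "\<And>t. t > 0 \<Longrightarrow> (G has_real_derivative -h t) (at t)"
    and hpos: "\<And>t. t > 0 \<Longrightarrow> h t > 0"
    and rv: "\<And>s. s > 0 \<Longrightarrow> ((\<lambda>v. h (s * v) / h v) \<longlongrightarrow> s powr -1) at_top"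
    and c: "c > 1"
  shows "((\<lambda>t. G (c*t) / G t) \<longlongrightarrow> 1) at_top"
proof (rule tendstoI)
  fix e :: real assume e: "e > 0"
  obtain N :: nat where N: "2/e < N" using reals_Archimedean2 by blast
  then have "N > 0" using e by (metis divide_pos_pos of_nat_0_less_iff order.strict_trans zero_less_numeral)
  with N e have "2/N < e" by (simp add: field_simps)
  have hpos': "eventually (\<lambda>v. h v > 0) at_top"
    using eventually_gt_at_top[of 0] by eventually_elim (use hpos in auto)
  have decr: "eventually (\<lambda>t. G t - G (c*t) \<le> 2/N * G t) at_top"
    by (rule decrement_le_of_RV_minus_one_derivative[OF Gpos der hpos' rv c \<open>N > 0\<close>])
  show "eventually (\<lambda>t. dist (G (c*t) / G t) 1 < e) at_top"
    using eventually_gt_at_top[of 0] decr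
  proof eventually_elim
    case (elim t)
    have Gt: "G t > 0" using Gpos elim by auto
    have "G (c*t) \<le> G t"
    proof (rule DERIV_nonpos_imp_nonincreasing[where f = G])
      fix x assume "t \<le> x"
      with elim have "x > 0" by linarith
      then show "\<exists>y. (G has_real_derivative y) (at x) \<and> y \<le> 0"
        using der hpos by (intro exI[of _ "-h x"]) (auto simp: less_imp_le)
    qed (use c elim in simp)
    then have "dist (G (c*t) / G t) 1 = (G t - G (c*t)) / G t"
      using Gt by (simp add: dist_real_def field_simps abs_if)
    also have "\<dots> \<le> 2/N" using elim Gt by (simp add: field_simps)
    finally show ?case using \<open>2/N < e\<close> by linarith
  qed
qed

lemma RV_inf_zeroI:
  fixes G :: "real \<Rightarrow> real"
  assumes meas: "set_borel_measurable borel {0<..} G"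
    and Gpos: "eventually (\<lambda>t. G t > 0) at_top"
    and lim: "\<And>c. c > 1 \<Longrightarrow> ((\<lambda>t. G (c*t) / G t) \<longlongrightarrow> 1) at_top"
  shows "G \<in> RV_inf 0"
proof -
  have "((\<lambda>t. G (c*t) / G t) \<longlongrightarrow> 1) at_top" if c: "c > 0" for c
  proof -
    consider "c > 1" | "c = 1" | "c < 1" by linarith
    then show ?thesis
    proof cases
      case 2
      have "eventually (\<lambda>t. G (c*t) / G t = 1) at_top"
        using Gpos by eventually_elim (use 2 in simp)
      then show ?thesis by (rule tendsto_eventually)
    next
      case 3
      have "filterlim (\<lambda>t. c*t) at_top at_top"
        using c by (intro filterlim_tendsto_pos_mult_at_top[OF tendsto_const] filterlim_ident)
      moreover have "1/c > 1" using 3 c by (simp add: field_simps)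
      ultimately have "((\<lambda>t. G (1/c * (c*t)) / G (c*t)) \<longlongrightarrow> 1) at_top"
        by (rule filterlim_compose[OF lim, rotated])
      then have "((\<lambda>t. G t / G (c*t)) \<longlongrightarrow> 1) at_top" using c by simp
      then have "((\<lambda>t. inverse (G t / G (c*t))) \<longlongrightarrow> inverse 1) at_top"
        by (rule tendsto_inverse) simp
      then show ?thesis by simp
    qed (rule lim)
  qed
  then show ?thesis unfolding RV_inf_def using meas Gpos by auto
qed

theorem mainTheorem8:
  fixes f :: "real \<Rightarrow> real"
  assumes cont: "continuous_on {0<..} f"
    and pos: "\<forall>x>0. f x > 0"
    and blowup: "filterlim (F_of f) at_top (at_right 0)"
    and rv: "(f \<circ> Finv f) \<in> RV_inf (-1)"
  shows "Finv f \<in> RV_inf 0"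
proof -
  interpret F_of_blowup f using cont pos blowup by unfold_locales
  have rv_lim: "((\<lambda>v. (f \<circ> Finv f) (s * v) / (f \<circ> Finv f) v) \<longlongrightarrow> s powr -1) at_top"
    if "s > 0" for s
    using rv that unfolding RV_inf_def by auto
  have "((\<lambda>t. Finv f (c*t) / Finv f t) \<longlongrightarrow> 1) at_top" if "c > 1" for c
    by (rule slowly_varying_of_RV_minus_one_derivative[OF _ _ _ rv_lim that])
       (use Finv_pos Finv_has_real_derivative pos in auto)
  moreover have "eventually (\<lambda>t. Finv f t > 0) at_top"
    using eventually_ge_at_top[of 0] by eventually_elim (rule Finv_pos)
  ultimately show ?thesis
    using Finv_borel_measurable by (intro RV_inf_zeroI)
qed

end
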